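(* Let $n\in\mathbb{N}$ and $0<s_1,\dots,s_n<1$ pairwise distinct. Then $$\mathcal{E}_\mu(s_1^z,\dots,s_n^z)\cap\prod_{j=1}^n s_j^{-1/2}\mathbb{T}\subseteq\overline{\{(s_1^{-\frac12+iy},\dots,s_n^{-\frac12+iy}):y\in\mathbb{R}\}}.$$
   Context: $\mu$ is the measure on $\Omega=\{\mathrm{Re}\,z\ge-\tfrac12\}$ given by $d\mu=\sum_{n=-1}^\infty \frac{|\Gamma(\frac n2+iy+1)|^2}{2\pi(n+1)!}\,dy\,d\delta_{n/2}(x)$; $s^z=e^{z\ln s}$; $\mathbb{T}$ the unit circle. The joint essential range $\mathcal{E}_\mu(\varphi_1,\dots,\varphi_n)$ of $\varphi_j\in L^\infty(\mu)$ is the set of $\lambda\in\mathbb{C}^n$ such that for every $\varepsilon>0$, $\mu(\{z:\sum_j|\varphi_j(z)-\lambda_j|<\varepsilon\})>0$. *)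

theory Defs
  imports "HOL-Analysis.Analysis"
begin

definition rpowc :: "real \<Rightarrow> complex \<Rightarrow> complex" where
  "rpowc s z = exp (z * complex_of_real (ln s))"

text \<open>Density of mu on the vertical line Re z = n/2, indexed by m = n + 1 \<in> \<nat>
  (so n ranges over -1, 0, 1, ...):  |Gamma(n/2 + iy + 1)|^2 / (2 pi (n+1)!).\<close>
definition mu_weight :: "nat \<Rightarrow> real \<Rightarrow> real" where
  "mu_weight m y = (cmod (Gamma (Complex ((real m - 1) / 2 + 1) y)))\<^sup>2 / (2 * pi * fact m)"

definition mu_emeasure :: "complex set \<Rightarrow> ennreal" where
  "mu_emeasure A = (\<Sum>m. \<integral>\<^sup>+ y. ennreal (mu_weight m y) *
                        indicator A (Complex ((real m - 1) / 2) y) \<partial>lborel)"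

definition joint_ess_range_mu :: "('n::finite \<Rightarrow> complex \<Rightarrow> complex) \<Rightarrow> (complex ^ 'n) set" where
  "joint_ess_range_mu \<phi> = {c. \<forall>\<epsilon>>0. mu_emeasure {z. (\<Sum>j\<in>UNIV. cmod (\<phi> j z - c $ j)) < \<epsilon>} > 0}"

end

theory Submission
  imports Defs
begin

text \<open>
  The measure mu is carried by the vertical lines Re z = (m-1)/2, m \<in> \<nat>,
  so a set of positive mu-measure must meet one of them; if the set lies in the open
  left half-plane, the only available line is Re z = -1/2.  On the closed right
  half-plane |s^z| \<le> 1 for 0 < s \<le> 1, whereas a point c of the joint essential range with
  |c_j| = s_j^(-1/2) > 1 has |c_j| > 1.  Hence every sufficiently small l1-neighbourhood
  of c (in the values of the functions s_j^z) is attained only at points with Re z < 0,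
  has positive measure, and therefore contains a point -1/2 + iy: this approximates c by
  the curve y \<mapsto> (s_j^(-1/2+iy))_j.  One coordinate suffices for the argument, so the
  distinctness of the s_j is not needed.
\<close>

lemma norm_vec_le_sum_norm: "norm (x :: complex ^ 'n) \<le> (\<Sum>i\<in>UNIV. cmod (x $ i))"
  by (simp add: norm_vec_def L2_set_le_sum)

lemma mu_emeasure_pos_meets_line:
  assumes "mu_emeasure A > 0"
  shows "\<exists>m y. Complex ((real m - 1) / 2) y \<in> A"
proof (rule ccontr)
  assume "\<not> ?thesis"
  then have "\<And>m y. indicator A (Complex ((real m - 1) / 2) y) = (0::ennreal)"
    by (simp add: indicator_def)
  then have "mu_emeasure A = 0" unfolding mu_emeasure_def by simp
  with assms show False by simp
qed

text \<open>Of these lines only Re z = -1/2 lies in the open left half-plane.\<close>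
lemma mu_emeasure_pos_left_halfplane:
  assumes "mu_emeasure A > 0" and "\<And>z. z \<in> A \<Longrightarrow> Re z < 0"
  shows "\<exists>y. Complex (-1/2) y \<in> A"
proof -
  obtain m y where my: "Complex ((real m - 1) / 2) y \<in> A"
    using mu_emeasure_pos_meets_line[OF assms(1)] by blast
  then have "(real m - 1) / 2 < 0" using assms(2) by fastforce
  then have "m = 0" by simp
  with my show ?thesis by auto
qed

lemma norm_rpowc: "cmod (rpowc s z) = exp (Re z * ln s)"
  by (simp add: rpowc_def)

text \<open>For a base 0 < s \<le> 1, the value s^z can lie closer than |w| - 1 to w only if Re z < 0,
  because |s^z| \<le> 1 on the closed right half-plane.\<close>
lemma rpowc_near_imp_left_halfplane:
  assumes "0 < s" "s \<le> 1" and near: "cmod (rpowc s z - w) < cmod w - 1"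
  shows "Re z < 0"
proof (rule ccontr)
  assume "\<not> Re z < 0"
  then have "Re z * ln s \<le> 0" using assms(1,2) by (simp add: mult_nonneg_nonpos)
  then have "cmod (rpowc s z) \<le> 1" by (simp add: norm_rpowc)
  then have "cmod w - 1 \<le> cmod (rpowc s z - w)"
    using norm_triangle_ineq3[of w "rpowc s z"] by (simp add: norm_minus_commute)
  with near show False by simp
qed

lemma powr_minus_half_gt_one:
  fixes s :: real
  assumes "0 < s" "s < 1"
  shows "s powr (-1/2) > 1"
proof -
  have "ln s < 0" using assms by simp
  then have "exp (-1/2 * ln s) > 1" by simp
  then show ?thesis using assms(1) by (simp add: powr_def)
qed

lemma joint_ess_range_in_closure_line:
  assumes c: "c \<in> joint_ess_range_mu \<phi>" and "\<delta> > 0"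
    and left: "\<And>z. (\<Sum>j\<in>UNIV. cmod (\<phi> j z - c $ j)) < \<delta> \<Longrightarrow> Re z < 0"
  shows "c \<in> closure (range (\<lambda>y::real. \<chi> j. \<phi> j (Complex (-1/2) y)))"
  unfolding closure_approachable
proof (intro allI impI)
  fix e :: real assume "e > 0"
  define A where "A = {z. (\<Sum>j\<in>UNIV. cmod (\<phi> j z - c $ j)) < min e \<delta>}"
  have "\<forall>\<epsilon>>0. mu_emeasure {z. (\<Sum>j\<in>UNIV. cmod (\<phi> j z - c $ j)) < \<epsilon>} > 0"
    using c by (simp add: joint_ess_range_mu_def)
  moreover have "min e \<delta> > 0" using \<open>e > 0\<close> \<open>\<delta> > 0\<close> by simp
  ultimately have "mu_emeasure A > 0" unfolding A_def by blast
  moreover have "\<And>z. z \<in> A \<Longrightarrow> Re z < 0" using left by (simp add: A_def)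
  ultimately obtain y where y: "Complex (-1/2) y \<in> A"
    using mu_emeasure_pos_left_halfplane by blast
  let ?v = "\<chi> j. \<phi> j (Complex (-1/2) y)"
  have "dist ?v c \<le> (\<Sum>j\<in>UNIV. cmod (\<phi> j (Complex (-1/2) y) - c $ j))"
    using norm_vec_le_sum_norm[of "?v - c"] by (simp add: dist_norm)
  also have "\<dots> < e" using y by (simp add: A_def)
  finally show "\<exists>x\<in>range (\<lambda>y::real. \<chi> j. \<phi> j (Complex (-1/2) y)). dist x c < e"
    by blast
qed

theorem mainTheorem9:
  fixes s :: "real ^ 'n"
  assumes "\<forall>j. 0 < s $ j \<and> s $ j < 1"
    and "inj (\<lambda>j. s $ j)"
  shows "joint_ess_range_mu (\<lambda>j z. rpowc (s $ j) z)
           \<inter> {c. \<forall>j. cmod (c $ j) = s $ j powr (-1/2)}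
         \<subseteq> closure (range (\<lambda>y::real. \<chi> j. rpowc (s $ j) (Complex (-1/2) y)))"
proof
  fix c assume c: "c \<in> joint_ess_range_mu (\<lambda>j z. rpowc (s $ j) z)
           \<inter> {c. \<forall>j. cmod (c $ j) = s $ j powr (-1/2)}"
  \<comment> \<open>any coordinate works; index types are nonempty\<close>
  obtain j0 :: 'n where True by simp
  have s0: "0 < s $ j0" "s $ j0 < 1" using assms(1) by auto
  have "cmod (c $ j0) > 1" using c powr_minus_half_gt_one[OF s0] by simp
  show "c \<in> closure (range (\<lambda>y::real. \<chi> j. rpowc (s $ j) (Complex (-1/2) y)))"
  proof (rule joint_ess_range_in_closure_line)
    show "c \<in> joint_ess_range_mu (\<lambda>j z. rpowc (s $ j) z)" using c by simp
    show "cmod (c $ j0) - 1 > 0" using \<open>cmod (c $ j0) > 1\<close> by simp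
  next
    fix z assume "(\<Sum>j\<in>UNIV. cmod (rpowc (s $ j) z - c $ j)) < cmod (c $ j0) - 1"
    moreover have "cmod (rpowc (s $ j0) z - c $ j0) \<le> (\<Sum>j\<in>UNIV. cmod (rpowc (s $ j) z - c $ j))"
      by (rule member_le_sum) auto
    ultimately show "Re z < 0"
      using rpowc_near_imp_left_halfplane[of "s $ j0" z "c $ j0"] s0 by simp
  qed
qed

end
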